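(* Let $f$ be a homogeneous polynomial of degree $d\ge 2$ on $\mathbb{C}^2$. Then the holomorphic Hessian metric $-\frac{1}{d(d-1)}\partial^2 f/\partial x_i\partial x_j$ is flat on the open set where the Hessian determinant $\det(\partial^2 f/\partial x_i\partial x_j)$ is nonzero.
   Context: Over $\mathbb{C}$, a (holomorphic) metric means a nondegenerate symmetric complex-bilinear form on the holomorphic tangent bundle; its Levi-Civita connection, curvature tensor and sectional curvatures are defined by the same algebraic formulas as for real pseudo-Riemannian metrics, and flat means the curvature tensor vanishes. *)

theory Defs
  imports "HOL-Analysis.Analysis"
begin

definition pd :: "nat \<Rightarrow> (complex \<times> complex \<Rightarrow> complex) \<Rightarrow> complex \<times> complex \<Rightarrow> complex" where
  "pd i F p = (if i = 0 then deriv (\<lambda>t. F (t, snd p)) (fst p)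
               else deriv (\<lambda>t. F (fst p, t)) (snd p))"

definition hom_poly :: "nat \<Rightarrow> (nat \<Rightarrow> complex) \<Rightarrow> complex \<times> complex \<Rightarrow> complex" where
  "hom_poly d a p = (\<Sum>k\<le>d. a k * fst p ^ k * snd p ^ (d - k))"

definition mdet :: "(nat \<Rightarrow> nat \<Rightarrow> complex \<times> complex \<Rightarrow> complex) \<Rightarrow> complex \<times> complex \<Rightarrow> complex" where
  "mdet g p = g 0 0 p * g 1 1 p - g 0 1 p * g 1 0 p"

definition ginv :: "(nat \<Rightarrow> nat \<Rightarrow> complex \<times> complex \<Rightarrow> complex) \<Rightarrow> nat \<Rightarrow> nat \<Rightarrow> complex \<times> complex \<Rightarrow> complex" where
  "ginv g i j p =
     (if i = 0 \<and> j = 0 then g 1 1 p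
      else if i = 1 \<and> j = 1 then g 0 0 p
      else - g i j p) / mdet g p"

definition christoffel :: "(nat \<Rightarrow> nat \<Rightarrow> complex \<times> complex \<Rightarrow> complex) \<Rightarrow> nat \<Rightarrow> nat \<Rightarrow> nat \<Rightarrow> complex \<times> complex \<Rightarrow> complex" where
  "christoffel g k i j p =
     (\<Sum>l<2. ginv g k l p * (pd i (g j l) p + pd j (g i l) p - pd l (g i j) p)) / 2"

definition riemann :: "(nat \<Rightarrow> nat \<Rightarrow> complex \<times> complex \<Rightarrow> complex) \<Rightarrow> nat \<Rightarrow> nat \<Rightarrow> nat \<Rightarrow> nat \<Rightarrow> complex \<times> complex \<Rightarrow> complex" where
  "riemann g l i j k p =
     pd i (christoffel g l j k) p - pd j (christoffel g l i k) p
     + (\<Sum>m<2. christoffel g l i m p * christoffel g m j k p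
              - christoffel g l j m p * christoffel g m i k p)"

definition flat_on :: "(nat \<Rightarrow> nat \<Rightarrow> complex \<times> complex \<Rightarrow> complex) \<Rightarrow> (complex \<times> complex) set \<Rightarrow> bool" where
  "flat_on g U \<longleftrightarrow> (\<forall>p\<in>U. \<forall>l<2. \<forall>i<2. \<forall>j<2. \<forall>k<2. riemann g l i j k p = 0)"

end

theory Submission
  imports Defs
begin

(* For a metric c * Hess f with constant c \<noteq> 0 the Christoffel symbols are
   Gamma^l_jk = 1/2 h^lm f_jkm, where h is the Hessian of f.  Since the derivative of h^-1 is
   -h^-1 (d h) h^-1, the fourth derivatives of f cancel from the curvature, which becomes
   R^l_ijk = [Gamma_j, Gamma_i]^l_k for the matrices (Gamma_i)^l_k = Gamma^l_ik.
   For f homogeneous of degree d, Euler's identity x f_0jk + y f_1jk = (d - 2) f_jk gives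
   x Gamma_0 + y Gamma_1 = (d - 2)/2 id, so Gamma_0 and Gamma_1 commute wherever (x, y) \<noteq> 0.
   At the origin the Hessian is invertible only if d = 2, and then the third derivatives
   vanish. *)

(* For m > k the truncated exponent k - m is harmless: the falling factorial then
   contains the factor k - k = 0. *)
definition pow_deriv :: "nat \<Rightarrow> nat \<Rightarrow> complex \<Rightarrow> complex" where
  "pow_deriv m k x = of_nat (\<Prod>i<m. k - i) * x ^ (k - m)"

lemma pow_deriv_0 [simp]: "pow_deriv 0 k x = x ^ k"
  by (simp add: pow_deriv_def)

lemma pow_deriv_eq_0: "k < m \<Longrightarrow> pow_deriv m k x = 0"
  by (auto simp: pow_deriv_def intro!: prod_zero bexI[of _ k])

lemma pow_deriv_has_field_derivative:
  "(pow_deriv m k has_field_derivative pow_deriv (Suc m) k x) (at x)"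
proof -
  have "k - m - 1 = k - Suc m" by simp
  then have "((\<lambda>x. of_nat (\<Prod>i<m. k - i) * x ^ (k - m)) has_field_derivative
      of_nat (\<Prod>i<m. k - i) * (of_nat (k - m) * x ^ (k - Suc m))) (at x)"
    by (auto intro!: derivative_eq_intros)
  then show ?thesis
    unfolding pow_deriv_def by (simp add: fun_eq_iff mult_ac)
qed

lemma pow_deriv_euler: "x * pow_deriv (Suc m) k x = of_nat (k - m) * pow_deriv m k x"
proof (cases "m < k")
  case True
  then have "x * x ^ (k - Suc m) = x ^ (k - m)"
    by (metis Suc_diff_Suc power_Suc)
  moreover have "x * pow_deriv (Suc m) k x
      = of_nat (k - m) * of_nat (\<Prod>i<m. k - i) * (x * x ^ (k - Suc m))"
    by (simp only: pow_deriv_def prod.lessThan_Suc of_nat_mult mult_ac)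
  ultimately show ?thesis
    by (simp only: pow_deriv_def mult.assoc)
qed (simp add: pow_deriv_eq_0)

definition hom_poly_deriv :: "nat \<Rightarrow> (nat \<Rightarrow> complex) \<Rightarrow> nat \<Rightarrow> nat \<Rightarrow> complex \<times> complex \<Rightarrow> complex" where
  "hom_poly_deriv d a m n p = (\<Sum>k\<le>d. a k * pow_deriv m k (fst p) * pow_deriv n (d - k) (snd p))"

lemma hom_poly_deriv_0_0: "hom_poly_deriv d a 0 0 = hom_poly d a"
  by (simp add: fun_eq_iff hom_poly_deriv_def hom_poly_def)

lemma hom_poly_deriv_has_field_derivative_fst:
  "((\<lambda>t. hom_poly_deriv d a m n (t, y)) has_field_derivative hom_poly_deriv d a (Suc m) n (t, y)) (at t)"
  unfolding hom_poly_deriv_def fst_conv snd_conv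
  by (intro DERIV_sum DERIV_cmult_right DERIV_cmult pow_deriv_has_field_derivative)

lemma hom_poly_deriv_has_field_derivative_snd:
  "((\<lambda>t. hom_poly_deriv d a m n (x, t)) has_field_derivative hom_poly_deriv d a m (Suc n) (x, t)) (at t)"
  unfolding hom_poly_deriv_def fst_conv snd_conv
  by (intro DERIV_sum DERIV_cmult_right DERIV_cmult pow_deriv_has_field_derivative)

lemma hom_poly_deriv_eq_0:
  assumes "d < m + n"
  shows "hom_poly_deriv d a m n p = 0"
  unfolding hom_poly_deriv_def
proof (rule sum.neutral, intro ballI)
  fix k assume "k \<in> {..d}"
  with assms have "k < m \<or> d - k < n" by auto
  then show "a k * pow_deriv m k (fst p) * pow_deriv n (d - k) (snd p) = 0"
    by (auto simp: pow_deriv_eq_0)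
qed

lemma hom_poly_deriv_euler:
  "fst p * hom_poly_deriv d a (Suc m) n p + snd p * hom_poly_deriv d a m (Suc n) p
    = (of_nat d - of_nat m - of_nat n) * hom_poly_deriv d a m n p"
proof -
  have "fst p * (a k * pow_deriv (Suc m) k (fst p) * pow_deriv n (d - k) (snd p))
      + snd p * (a k * pow_deriv m k (fst p) * pow_deriv (Suc n) (d - k) (snd p))
      = (of_nat d - of_nat m - of_nat n) * (a k * pow_deriv m k (fst p) * pow_deriv n (d - k) (snd p))"
    if "k \<le> d" for k
  proof (cases "m \<le> k \<and> n \<le> d - k")
    case True
    then have exponents: "of_nat (k - m) + of_nat (d - k - n) = (of_nat d - of_nat m - of_nat n :: complex)"
      using that by (simp add: of_nat_diff le_diff_conv2)
    have "fst p * (a k * pow_deriv (Suc m) k (fst p) * pow_deriv n (d - k) (snd p))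
      + snd p * (a k * pow_deriv m k (fst p) * pow_deriv (Suc n) (d - k) (snd p))
      = a k * (fst p * pow_deriv (Suc m) k (fst p)) * pow_deriv n (d - k) (snd p)
      + a k * pow_deriv m k (fst p) * (snd p * pow_deriv (Suc n) (d - k) (snd p))"
      by (simp only: mult_ac)
    also have "\<dots> = (of_nat (k - m) + of_nat (d - k - n))
        * (a k * pow_deriv m k (fst p) * pow_deriv n (d - k) (snd p))"
      by (simp only: pow_deriv_euler) (simp add: algebra_simps)
    finally show ?thesis
      by (simp only: exponents)
  qed (auto simp: pow_deriv_eq_0 not_le)
  then show ?thesis
    unfolding hom_poly_deriv_def by (simp add: sum_distrib_left flip: sum.distrib)
qed

lemma ginv_scale:
  assumes "c \<noteq> 0"
  shows "ginv (\<lambda>i j q. c * M i j q) l m q = ginv M l m q / c"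
proof -
  have "mdet (\<lambda>i j q. c * M i j q) q = c * (c * mdet M q)"
    by (simp add: mdet_def algebra_simps)
  then show ?thesis
    using assms by (simp add: ginv_def)
qed

lemma ginv_left_inverse:
  assumes "mdet M p \<noteq> 0" "l < 2" "k < 2"
  shows "(\<Sum>m<2. ginv M l m p * M m k p) = (if l = k then 1 else 0)"
proof -
  have "(\<Sum>m<2. ginv M l m p * M m k p) = (\<Sum>m<2. (if l = 0 \<and> m = 0 then M 1 1 p
      else if l = 1 \<and> m = 1 then M 0 0 p else - M l m p) * M m k p) / mdet M p"
    by (simp add: ginv_def sum_divide_distrib)
  also have "(\<Sum>m<2. (if l = 0 \<and> m = 0 then M 1 1 p
      else if l = 1 \<and> m = 1 then M 0 0 p else - M l m p) * M m k p) = (if l = k then mdet M p else 0)"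
    using assms(2,3) by (auto simp: mdet_def numeral_2_eq_2 less_Suc_eq)
  finally show ?thesis
    using assms(1) by simp
qed

lemma ginv_has_field_derivative:
  assumes M': "\<And>a b. a < 2 \<Longrightarrow> b < 2 \<Longrightarrow> ((\<lambda>t. M a b (\<gamma> t)) has_field_derivative M' a b) (at t)"
    and "mdet M (\<gamma> t) \<noteq> 0" "l < 2" "m < 2"
  shows "((\<lambda>t. ginv M l m (\<gamma> t)) has_field_derivative
    - (\<Sum>a<2. \<Sum>b<2. ginv M l a (\<gamma> t) * M' a b * ginv M b m (\<gamma> t))) (at t)"
proof -
  have lm: "l = 0 \<or> l = 1" "m = 0 \<or> m = 1"
    using assms(3,4) by auto
  show ?thesis
    using lm assms(2) unfolding ginv_def mdet_def
    by (elim disjE; hypsubst_thin; auto intro!: derivative_eq_intros M' simp: numeral_2_eq_2 divide_simps)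
      (simp_all add: algebra_simps)
qed

lemma matrix_mult_commute_affine:
  fixes A B :: "nat \<Rightarrow> nat \<Rightarrow> 'a::comm_ring_1"
  assumes A: "\<And>l k. l < n \<Longrightarrow> k < n \<Longrightarrow> A l k = (if l = k then s else 0) + v * B l k"
    and "l < n" "k < n"
  shows "(\<Sum>m<n. A l m * B m k) = (\<Sum>m<n. B l m * A m k)"
proof -
  have "(\<Sum>m<n. A l m * B m k) = (\<Sum>m<n. B m k * (if l = m then s else 0)) + v * (\<Sum>m<n. B l m * B m k)"
    using \<open>l < n\<close> by (simp add: A algebra_simps sum.distrib sum_distrib_left)
  also have "\<dots> = s * B l k + v * (\<Sum>m<n. B l m * B m k)"
    using \<open>l < n\<close> by (simp add: if_distrib[of "times _"] cong: if_cong)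
  also have "\<dots> = (\<Sum>m<n. B l m * (if m = k then s else 0)) + v * (\<Sum>m<n. B l m * B m k)"
    using \<open>k < n\<close> by (simp add: if_distrib[of "times _"] cong: if_cong)
  also have "\<dots> = (\<Sum>m<n. B l m * A m k)"
    using \<open>k < n\<close> by (simp add: A algebra_simps sum.distrib sum_distrib_left)
  finally show ?thesis .
qed

lemma matrix_mult_commute_if_lincomb_scalar:
  fixes A B :: "nat \<Rightarrow> nat \<Rightarrow> 'a::field"
  assumes lincomb: "\<And>l k. l < n \<Longrightarrow> k < n \<Longrightarrow> u * A l k + v * B l k = (if l = k then s else 0)"
    and "u \<noteq> 0 \<or> v \<noteq> 0" and "l < n" "k < n"
  shows "(\<Sum>m<n. A l m * B m k) = (\<Sum>m<n. B l m * A m k)"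
  using assms(2)
proof
  assume "u \<noteq> 0"
  then have "A l' k' = (if l' = k' then s / u else 0) + (- v / u) * B l' k'" if "l' < n" "k' < n" for l' k'
    using lincomb[OF that] by (auto simp: field_simps)
  then show ?thesis
    by (rule matrix_mult_commute_affine) (use assms(3,4) in auto)
next
  assume "v \<noteq> 0"
  then have "B l' k' = (if l' = k' then s / v else 0) + (- u / v) * A l' k'" if "l' < n" "k' < n" for l' k'
    using lincomb[OF that] by (auto simp: field_simps)
  then show ?thesis
    by (rule matrix_mult_commute_affine[symmetric]) (use assms(3,4) in auto)
qed

definition line :: "nat \<Rightarrow> complex \<times> complex \<Rightarrow> complex \<Rightarrow> complex \<times> complex" where
  "line i p t = (if i = 0 then (t, snd p) else (fst p, t))"

definition coord :: "nat \<Rightarrow> complex \<times> complex \<Rightarrow> complex" where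
  "coord i p = (if i = 0 then fst p else snd p)"

lemma line_coord [simp]: "line i p (coord i p) = p"
  by (simp add: line_def coord_def)

lemma pd_eqI:
  assumes "((\<lambda>t. F (line i p t)) has_field_derivative D) (at (coord i p))"
  shows "pd i F p = D"
  using assms unfolding pd_def line_def coord_def
  by (cases "i = 0") (auto intro: DERIV_imp_deriv)

locale iterated_partials =
  fixes D :: "nat list \<Rightarrow> complex \<times> complex \<Rightarrow> complex"
  assumes has_field_derivative_line:
      "((\<lambda>t. D is (line i p t)) has_field_derivative D (i # is) (line i p t)) (at t)"
    and mset_eq_imp_eq: "mset is = mset js \<Longrightarrow> D is = D js"
begin

abbreviation hessian :: "nat \<Rightarrow> nat \<Rightarrow> complex \<times> complex \<Rightarrow> complex" where
  "hessian i j \<equiv> D [i, j]"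

lemma has_field_derivative_coord:
  "((\<lambda>t. D is (line i p t)) has_field_derivative D (i # is) p) (at (coord i p))"
  using has_field_derivative_line[of "is" i p "coord i p"] by simp

lemma pd_eq: "pd i (D is) = D (i # is)"
  by (rule ext, rule pd_eqI, rule has_field_derivative_coord)

lemma pd_scaled: "pd i (\<lambda>q. c * D is q) = (\<lambda>q. c * D (i # is) q)"
  by (rule ext, rule pd_eqI, intro DERIV_cmult has_field_derivative_coord)

definition hess_christoffel :: "nat \<Rightarrow> nat \<Rightarrow> nat \<Rightarrow> complex \<times> complex \<Rightarrow> complex" where
  "hess_christoffel l j k q = (\<Sum>m<2. ginv hessian l m q * D [j, k, m] q) / 2"

lemma christoffel_scaled_hessian:
  assumes "c \<noteq> 0"
  shows "christoffel (\<lambda>i j q. c * hessian i j q) = hess_christoffel"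
proof (intro ext)
  fix l i j q
  have "D [j, i, m] = D [i, j, m]" "D [m, i, j] = D [i, j, m]" for m
    by (auto intro: mset_eq_imp_eq)
  then show "christoffel (\<lambda>i j q. c * hessian i j q) l i j q = hess_christoffel l i j q"
    using assms unfolding christoffel_def hess_christoffel_def
    by (simp add: pd_scaled ginv_scale)
qed

lemma pd_hess_christoffel:
  assumes "mdet hessian p \<noteq> 0" "l < 2"
  shows "pd i (hess_christoffel l j k) p
    = (\<Sum>m<2. ginv hessian l m p * D [i, j, k, m] p) / 2
      - 2 * (\<Sum>m<2. hess_christoffel l i m p * hess_christoffel m j k p)"
proof -
  let ?G = "ginv hessian"
  have G': "((\<lambda>t. ?G a m (line i p t)) has_field_derivative
      - (\<Sum>b<2. \<Sum>c<2. ?G a b p * D [i, b, c] p * ?G c m p)) (at (coord i p))"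
    if "a < 2" "m < 2" for a m
    using ginv_has_field_derivative[where \<gamma> = "line i p" and t = "coord i p" and M' = "\<lambda>a b. D [i, a, b] p",
        OF has_field_derivative_coord] assms(1) that by simp
  have "pd i (hess_christoffel l j k) p = (\<Sum>m<2. - (\<Sum>a<2. \<Sum>b<2. ?G l a p * D [i, a, b] p * ?G b m p)
      * D [j, k, m] p + ?G l m p * D [i, j, k, m] p) / 2"
    unfolding hess_christoffel_def
    by (rule pd_eqI) (auto intro!: derivative_eq_intros DERIV_sum G' assms(2) has_field_derivative_coord
        simp: algebra_simps)
  also have "\<dots> = (\<Sum>m<2. ?G l m p * D [i, j, k, m] p) / 2
      - 2 * (\<Sum>m<2. hess_christoffel l i m p * hess_christoffel m j k p)"
  proof -
    have "D [i, Suc 0, 0] = D [i, 0, Suc 0]"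
      by (auto intro: mset_eq_imp_eq)
    then show ?thesis
      by (simp add: hess_christoffel_def numeral_2_eq_2 field_simps)
  qed
  finally show ?thesis .
qed

lemma riemann_scaled_hessian:
  assumes "c \<noteq> 0" "mdet hessian p \<noteq> 0" "l < 2"
  shows "riemann (\<lambda>i j q. c * hessian i j q) l i j k p
    = (\<Sum>m<2. hess_christoffel l j m p * hess_christoffel m i k p)
      - (\<Sum>m<2. hess_christoffel l i m p * hess_christoffel m j k p)"
proof -
  have "D [j, i, k, m] = D [i, j, k, m]" for m
    by (auto intro: mset_eq_imp_eq)
  then show ?thesis
    using assms unfolding riemann_def christoffel_scaled_hessian[OF assms(1)]
    by (simp add: pd_hess_christoffel sum_subtractf algebra_simps)
qed

lemma hess_christoffel_euler:
  assumes "mdet hessian p \<noteq> 0" "l < 2" "k < 2"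
    and euler: "\<And>j k. fst p * D [0, j, k] p + snd p * D [1, j, k] p = e * D [j, k] p"
  shows "fst p * hess_christoffel l 0 k p + snd p * hess_christoffel l 1 k p
    = (if l = k then e / 2 else 0)"
proof -
  have "fst p * hess_christoffel l 0 k p + snd p * hess_christoffel l 1 k p
      = (\<Sum>m<2. ginv hessian l m p * (fst p * D [0, k, m] p + snd p * D [1, k, m] p)) / 2"
    by (simp add: hess_christoffel_def numeral_2_eq_2 field_simps)
  also have "\<dots> = e / 2 * (\<Sum>m<2. ginv hessian l m p * hessian m k p)"
  proof -
    have "fst p * D [0, k, m] p + snd p * D [1, k, m] p = e * hessian m k p" for m
      using euler[of k m] mset_eq_imp_eq[of "[k, m]" "[m, k]"] by (simp add: add_mset_commute)
    then show ?thesis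
      by (simp add: sum_distrib_left mult_ac)
  qed
  also have "\<dots> = (if l = k then e / 2 else 0)"
    by (simp add: ginv_left_inverse[OF assms(1-3)])
  finally show ?thesis .
qed

end

(* As in pd, every index other than 0 refers to the second coordinate. *)
definition hom_partial :: "nat \<Rightarrow> (nat \<Rightarrow> complex) \<Rightarrow> nat list \<Rightarrow> complex \<times> complex \<Rightarrow> complex" where
  "hom_partial d a is = hom_poly_deriv d a (count (mset is) 0) (length is - count (mset is) 0)"

lemma hom_partial_Nil: "hom_partial d a [] = hom_poly d a"
  by (simp add: hom_partial_def hom_poly_deriv_0_0)

lemma hom_partial_eq_0: "d < length is \<Longrightarrow> hom_partial d a is p = 0"
  using count_le_size[of "mset is" 0] by (simp add: hom_partial_def hom_poly_deriv_eq_0)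

lemma hom_partial_euler:
  "fst p * hom_partial d a (0 # is) p + snd p * hom_partial d a (1 # is) p
    = (of_nat d - of_nat (length is)) * hom_partial d a is p"
proof -
  define c where "c = count (mset is) 0"
  define n where "n = length is - c"
  have len: "length is = c + n"
    using count_le_size[of "mset is" 0] by (simp add: c_def n_def)
  have "hom_partial d a (0 # is) = hom_poly_deriv d a (Suc c) n"
    "hom_partial d a (1 # is) = hom_poly_deriv d a c (Suc n)"
    "hom_partial d a is = hom_poly_deriv d a c n"
    by (simp_all add: hom_partial_def len flip: c_def)
  then show ?thesis
    by (simp add: hom_poly_deriv_euler len algebra_simps)
qed

interpretation hom: iterated_partials "hom_partial d a" for d a
proof
  fix xs :: "nat list" and i p t
  have "Suc (length xs) - count (mset xs) 0 = Suc (length xs - count (mset xs) 0)"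
    using count_le_size[of "mset xs" 0] by (simp add: Suc_diff_le)
  then show "((\<lambda>t. hom_partial d a xs (line i p t)) has_field_derivative
      hom_partial d a (i # xs) (line i p t)) (at t)"
    using hom_poly_deriv_has_field_derivative_fst hom_poly_deriv_has_field_derivative_snd
    by (simp add: hom_partial_def line_def)
next
  fix xs ys :: "nat list"
  assume "mset xs = mset ys"
  then show "hom_partial d a xs = hom_partial d a ys"
    unfolding hom_partial_def by (metis size_mset)
qed

lemma hom_hess_christoffel_commute:
  assumes "mdet (hom.hessian d a) p \<noteq> 0" "l < 2" "k < 2" "i < 2" "j < 2"
  shows "(\<Sum>m<2. hom.hess_christoffel d a l i m p * hom.hess_christoffel d a m j k p)
    = (\<Sum>m<2. hom.hess_christoffel d a l j m p * hom.hess_christoffel d a m i k p)"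
proof (cases "p = 0")
  case True
  obtain j' k' where "hom_partial d a [j', k'] p \<noteq> 0"
    using assms(1) unfolding mdet_def by (metis diff_self mult_zero_left)
  moreover have "(of_nat d - 2) * hom_partial d a [j', k'] p = 0"
    using hom_partial_euler[of p d a "[j', k']"] True by simp
  ultimately have "of_nat d = (of_nat 2 :: complex)"
    by simp
  then have "d = 2"
    by (simp only: of_nat_eq_iff)
  then have "hom.hess_christoffel d a l' j' k' p = 0" for l' j' k'
    by (simp add: hom.hess_christoffel_def hom_partial_eq_0)
  then show ?thesis
    by simp
next
  case False
  then have nonzero: "fst p \<noteq> 0 \<or> snd p \<noteq> 0"
    by (simp add: prod_eq_iff)
  have lincomb: "fst p * hom.hess_christoffel d a l' 0 k' p + snd p * hom.hess_christoffel d a l' 1 k' p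
      = (if l' = k' then (of_nat d - 2) / 2 else 0)" if "l' < 2" "k' < 2" for l' k'
    using hom.hess_christoffel_euler[OF assms(1) that] hom_partial_euler[of p d a] by simp
  have "(\<Sum>m<2. hom.hess_christoffel d a l 0 m p * hom.hess_christoffel d a m 1 k p)
      = (\<Sum>m<2. hom.hess_christoffel d a l 1 m p * hom.hess_christoffel d a m 0 k p)"
    by (rule matrix_mult_commute_if_lincomb_scalar[where u = "fst p" and v = "snd p"])
      (use lincomb nonzero assms(2,3) in auto)
  then show ?thesis
    using assms(4,5) by (auto simp: less_2_cases_iff)
qed

theorem lemma6p1:
  fixes d :: nat and a :: "nat \<Rightarrow> complex"
  assumes "d \<ge> 2"
  defines "f \<equiv> hom_poly d a"
  defines "g \<equiv> (\<lambda>i j p. - (1 / (of_nat d * (of_nat d - 1))) * pd i (pd j f) p)"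
  shows "flat_on g {p. mdet (\<lambda>i j. pd i (pd j f)) p \<noteq> 0}"
proof -
  let ?c = "- (1 / (of_nat d * (of_nat d - 1))) :: complex"
  have "?c \<noteq> 0"
    using assms(1) by (simp add: of_nat_diff[symmetric])
  have hessian: "pd i (pd j f) = hom.hessian d a i j" for i j
    by (simp add: f_def flip: hom_partial_Nil) (simp add: hom.pd_eq)
  show ?thesis
    unfolding flat_on_def
  proof (intro ballI allI impI)
    fix p and l i j k :: nat
    assume "p \<in> {p. mdet (\<lambda>i j. pd i (pd j f)) p \<noteq> 0}" "l < 2" "i < 2" "j < 2" "k < 2"
    then have "mdet (hom.hessian d a) p \<noteq> 0"
      by (simp add: hessian)
    then show "riemann g l i j k p = 0"
      using hom.riemann_scaled_hessian[OF \<open>?c \<noteq> 0\<close>] hom_hess_christoffel_commute \<open>l < 2\<close>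
        \<open>i < 2\<close> \<open>j < 2\<close> \<open>k < 2\<close>
      by (simp add: g_def hessian)
  qed
qed

end
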